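(* Let $E\in\mathcal{E}_n$ be an extreme point of $\mathcal{E}_n$ with $r=\mathrm{rank}(E)$, and let $u_1,\ldots,u_n\in\mathbb{R}^r$ satisfy $E=\mathrm{Gram}(u_1,\ldots,u_n)$ and $\mathrm{span}(u_1,\ldots,u_n)=\mathbb{R}^r$. Let $d\ge 1$ and let $Q_1,Q_2:\mathbb{R}^r\to\mathcal{H}_d$ be operator valued quadratic maps such that $Q_1(u_i)=Q_2(u_i)$ for all $i\in\{1,\ldots,n\}$. Then $Q_1=Q_2$.
   Context: $\mathcal{E}_n$ denotes the elliptope: the set of real symmetric positive semidefinite $n\times n$ matrices with all diagonal entries equal to $1$; an extreme point is a point not expressible as a proper convex combination of two distinct points of $\mathcal{E}_n$. $\mathrm{Gram}(u_1,\ldots,u_n)$ is the $n\times n$ matrix with entries $\langle u_i,u_j\rangle$ (standard inner product on $\mathbb{R}^r$). $\mathcal{H}_d$ is the real vector space of $d\times d$ complex Hermitian matrices. An operator valued quadratic map $Q:\mathbb{R}^r\to\mathcal{H}_d$ is a map of the form $Q(x)=\sum_{k,l=1}^r x_kx_l H_{kl}$ for some Hermitian matrices $H_{kl}\in\mathcal{H}_d$ (equivalently, every real coordinate of $Q$, viewing $\mathcal{H}_d\cong\mathbb{R}^{d^2}$, is a real quadratic form on $\mathbb{R}^r$). *)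

theory Defs
  imports "HOL-Analysis.Analysis"
begin

definition elliptope :: "(real^'n^'n) set" where
  "elliptope = {E. transpose E = E \<and> (\<forall>x. 0 \<le> x \<bullet> (E *v x)) \<and> (\<forall>i. E $ i $ i = 1)}"

definition hermitian :: "complex^'d^'d \<Rightarrow> bool" where
  "hermitian H \<longleftrightarrow> (\<forall>i j. H $ i $ j = cnj (H $ j $ i))"

definition op_quadratic_map :: "(real^'r \<Rightarrow> complex^'d^'d) \<Rightarrow> bool" where
  "op_quadratic_map Q \<longleftrightarrow> (\<exists>H :: 'r \<Rightarrow> 'r \<Rightarrow> complex^'d^'d.
      (\<forall>k l. hermitian (H k l)) \<and>
      (\<forall>x. Q x = (\<Sum>k\<in>UNIV. \<Sum>l\<in>UNIV. (x $ k * x $ l) *\<^sub>R H k l)))"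

end

theory Submission
  imports Defs
begin

text \<open>Every real and imaginary entry of Q1 - Q2 is a real quadratic form q with q(u_i) = 0 for all i.
  Write q(x) = G(x, x) with G bilinear. The symmetric matrix F with entries G(u_i, u_j) + G(u_j, u_i)
  has zero diagonal, and E + tF is the Gram matrix of the form x \<bullet> y + t(G(x, y) + G(y, x)),
  which is positive semidefinite for small |t|. So E + tF and E - tF lie in the elliptope, and
  extremality of E forces F = 0. As the u_i span, G(x, y) + G(y, x) vanishes identically, hence q = 0.\<close>

lemma bilinear_inner: "bilinear (\<bullet>)"
  by (simp add: bilinear_def linear_iff inner_add_left inner_add_right)

lemma bilinear_zero: "bilinear (\<lambda>x y. 0)"
  by (simp add: bilinear_def linear_iff)

lemma bilinear_add:
  assumes "bilinear f" "bilinear g"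
  shows "bilinear (\<lambda>x y. f x y + g x y)"
  using assms by (simp add: bilinear_def linear_compose_add)

lemma bilinear_diff:
  assumes "bilinear f" "bilinear g"
  shows "bilinear (\<lambda>x y. f x y - g x y)"
  using assms by (simp add: bilinear_def linear_compose_sub)

lemma bilinear_swap: "bilinear f \<Longrightarrow> bilinear (\<lambda>x y. f y x)"
  by (simp add: bilinear_def)

lemma bilinear_scaleR: "bilinear f \<Longrightarrow> bilinear (\<lambda>x y. c *\<^sub>R f x y)"
  by (simp add: bilinear_def linear_compose_scale_right)

lemma quadratic_form_bilinear_matrix:
  fixes S :: "'a::real_vector \<Rightarrow> 'a \<Rightarrow> real" and u :: "'n::finite \<Rightarrow> 'a"
  assumes "bilinear S"
  shows "y \<bullet> ((\<chi> i j. S (u i) (u j)) *v y)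
    = S (\<Sum>i\<in>UNIV. y $ i *\<^sub>R u i) (\<Sum>j\<in>UNIV. y $ j *\<^sub>R u j)"
proof -
  have "y \<bullet> ((\<chi> i j. S (u i) (u j)) *v y)
      = (\<Sum>i\<in>UNIV. \<Sum>j\<in>UNIV. y $ i * (S (u i) (u j) * y $ j))"
    by (simp add: inner_vec_def matrix_vector_mult_def sum_distrib_left)
  also have "\<dots> = S (\<Sum>i\<in>UNIV. y $ i *\<^sub>R u i) (\<Sum>j\<in>UNIV. y $ j *\<^sub>R u j)"
    by (simp add: bilinear_sum[OF assms] sum.cartesian_product bilinear_lmul[OF assms]
        bilinear_rmul[OF assms] case_prod_beta mult_ac)
  finally show ?thesis .
qed

lemma bilinear_gram_in_elliptope:
  fixes S :: "'a::real_vector \<Rightarrow> 'a \<Rightarrow> real" and u :: "'n::finite \<Rightarrow> 'a"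
  assumes "bilinear S" "\<And>x y. S x y = S y x" "\<And>x. 0 \<le> S x x" "\<And>i. S (u i) (u i) = 1"
  shows "(\<chi> i j. S (u i) (u j)) \<in> elliptope"
proof -
  have "transpose (\<chi> i j. S (u i) (u j)) = (\<chi> i j. S (u i) (u j))"
    by (simp add: transpose_def vec_eq_iff assms(2))
  moreover have "0 \<le> y \<bullet> ((\<chi> i j. S (u i) (u j)) *v y)" for y
    unfolding quadratic_form_bilinear_matrix[OF assms(1)] by (rule assms(3))
  ultimately show ?thesis
    by (simp add: elliptope_def assms(4))
qed

lemma extreme_point_of_plus_minus:
  assumes "x extreme_point_of S" "x - d \<in> S" "x + d \<in> S"
  shows "d = 0"
proof (rule ccontr)
  assume "d \<noteq> 0"
  have "x - d \<noteq> x + d"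
  proof
    assume "x - d = x + d"
    then have "2 *\<^sub>R d = 0"
      by (simp add: scaleR_2 algebra_simps)
    with \<open>d \<noteq> 0\<close> show False
      by simp
  qed
  then have "midpoint (x - d) (x + d) \<in> open_segment (x - d) (x + d)"
    by simp
  moreover have "midpoint (x - d) (x + d) = x"
    by (simp add: midpoint_def scaleR_2 flip: scaleR_add_right)
  ultimately show False
    using assms by (auto simp: extreme_point_of_def)
qed

lemma elliptope_gram_perturbation:
  fixes E :: "real^'n^'n" and u :: "'n \<Rightarrow> 'a::euclidean_space" and G :: "'a \<Rightarrow> 'a \<Rightarrow> real"
  assumes gram: "\<And>i j. E $ i $ j = u i \<bullet> u j" and unit: "\<And>i. u i \<bullet> u i = 1"
    and G: "bilinear G" and G_diag: "\<And>i. G (u i) (u i) = 0"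
  obtains t where "t > 0"
    and "\<And>s. \<bar>s\<bar> \<le> t \<Longrightarrow> E + s *\<^sub>R (\<chi> i j. G (u i) (u j) + G (u j) (u i)) \<in> elliptope"
proof -
  obtain B where "B > 0" and B: "\<And>x y. \<bar>G x y\<bar> \<le> B * norm x * norm y"
    using bilinear_bounded_pos[OF G] by auto
  have perturb: "E + s *\<^sub>R (\<chi> i j. G (u i) (u j) + G (u j) (u i)) \<in> elliptope"
    if s: "\<bar>s\<bar> \<le> 1 / (2 * B)" for s
  proof -
    define S where "S x y = x \<bullet> y + s *\<^sub>R (G x y + G y x)" for x y
    have "bilinear S"
      unfolding S_def by (intro bilinear_add bilinear_scaleR bilinear_inner G bilinear_swap)
    moreover have "S x y = S y x" for x y
      by (simp add: S_def inner_commute)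
    moreover have "0 \<le> S x x" for x
    proof -
      have "\<bar>s * (2 * G x x)\<bar> \<le> 1 / (2 * B) * (2 * (B * norm x * norm x))"
        unfolding abs_mult using s B[of x x] \<open>B > 0\<close> by (intro mult_mono) auto
      also have "\<dots> = x \<bullet> x"
        using \<open>B > 0\<close> by (simp add: dot_square_norm power2_eq_square)
      finally show ?thesis
        by (simp add: S_def)
    qed
    moreover have "S (u i) (u i) = 1" for i
      by (simp add: S_def unit G_diag)
    ultimately have "(\<chi> i j. S (u i) (u j)) \<in> elliptope"
      by (rule bilinear_gram_in_elliptope)
    moreover have "(\<chi> i j. S (u i) (u j)) = E + s *\<^sub>R (\<chi> i j. G (u i) (u j) + G (u j) (u i))"
      by (simp add: vec_eq_iff S_def gram)
    ultimately show ?thesis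
      by simp
  qed
  have "1 / (2 * B) > 0"
    using \<open>B > 0\<close> by simp
  then show thesis
    using perturb by (rule that)
qed

lemma extreme_gram_bilinear_diag_eq_0:
  fixes E :: "real^'n^'n" and u :: "'n \<Rightarrow> 'a::euclidean_space" and G :: "'a \<Rightarrow> 'a \<Rightarrow> real"
  assumes extreme: "E extreme_point_of elliptope" and gram: "\<And>i j. E $ i $ j = u i \<bullet> u j"
    and span: "span (range u) = UNIV"
    and G: "bilinear G" and G_diag: "\<And>i. G (u i) (u i) = 0"
  shows "G x x = 0"
proof -
  define F :: "real^'n^'n" where "F = (\<chi> i j. G (u i) (u j) + G (u j) (u i))"
  have "E \<in> elliptope"
    using extreme by (simp add: extreme_point_of_def)
  then have "u i \<bullet> u i = 1" for i
    by (simp add: elliptope_def flip: gram)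
  then obtain t where "t > 0" and perturb: "\<And>s. \<bar>s\<bar> \<le> t \<Longrightarrow> E + s *\<^sub>R F \<in> elliptope"
    using elliptope_gram_perturbation[OF gram _ G G_diag] unfolding F_def by blast
  have "t *\<^sub>R F = 0"
    using extreme_point_of_plus_minus[OF extreme, of "t *\<^sub>R F"] perturb[of t] perturb[of "- t"]
      \<open>t > 0\<close>
    by auto
  with \<open>t > 0\<close> have "G (u i) (u j) + G (u j) (u i) = 0" for i j
    by (simp add: F_def vec_eq_iff)
  then have "G x x + G x x = 0"
    using bilinear_eq[OF bilinear_add[OF G bilinear_swap[OF G]] bilinear_zero,
        of UNIV "range u" UNIV "range u" x x]
    by (auto simp: span)
  then show ?thesis
    by simp
qed

lemma extreme_gram_bilinear_diag_eq:
  fixes E :: "real^'n^'n" and u :: "'n \<Rightarrow> 'a::euclidean_space" and G H :: "'a \<Rightarrow> 'a \<Rightarrow> real"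
  assumes "E extreme_point_of elliptope" "\<And>i j. E $ i $ j = u i \<bullet> u j"
    and "span (range u) = UNIV"
    and "bilinear G" "bilinear H" "\<And>i. G (u i) (u i) = H (u i) (u i)"
  shows "G x x = H x x"
  using extreme_gram_bilinear_diag_eq_0[OF assms(1-3) bilinear_diff[OF assms(4,5)]] assms(6)
  by simp

definition coeff_bilinear :: "('r \<Rightarrow> 'r \<Rightarrow> real) \<Rightarrow> real^'r \<Rightarrow> real^'r \<Rightarrow> real" where
  "coeff_bilinear h x y = (\<Sum>k\<in>UNIV. \<Sum>l\<in>UNIV. x $ k * y $ l * h k l)"

lemma bilinear_coeff_bilinear: "bilinear (coeff_bilinear h)"
  unfolding bilinear_def coeff_bilinear_def
  by (auto intro!: linearI simp: algebra_simps sum.distrib sum_distrib_left)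

lemma op_quadratic_map_entry:
  fixes Q :: "real^'r \<Rightarrow> complex^'d^'d"
  assumes "op_quadratic_map Q"
  obtains hr hi where "\<And>x. Q x $ a $ b = Complex (coeff_bilinear hr x x) (coeff_bilinear hi x x)"
proof -
  obtain H where "\<And>x. Q x = (\<Sum>k\<in>UNIV. \<Sum>l\<in>UNIV. (x $ k * x $ l) *\<^sub>R H k l)"
    using assms unfolding op_quadratic_map_def by blast
  then show ?thesis
    by (intro that[of "\<lambda>k l. Re (H k l $ a $ b)" "\<lambda>k l. Im (H k l $ a $ b)"])
      (simp add: complex_eq_iff coeff_bilinear_def)
qed

theorem theorem2p3:
  fixes E :: "real^'n^'n"
    and u :: "'n \<Rightarrow> real^'r"
    and Q1 Q2 :: "real^'r \<Rightarrow> complex^'d^'d"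
  assumes "E extreme_point_of elliptope"
    and "CARD('r) = rank E"
    and "\<forall>i j. E $ i $ j = u i \<bullet> u j"
    and "span (range u) = UNIV"
    and "op_quadratic_map Q1"
    and "op_quadratic_map Q2"
    and "\<forall>i. Q1 (u i) = Q2 (u i)"
  shows "Q1 = Q2"
proof -
  have gram: "\<And>i j. E $ i $ j = u i \<bullet> u j"
    using assms(3) by simp
  note quadratic_eq = extreme_gram_bilinear_diag_eq[OF assms(1) gram assms(4)
      bilinear_coeff_bilinear bilinear_coeff_bilinear]
  have "Q1 x $ a $ b = Q2 x $ a $ b" for x a b
  proof -
    obtain hr1 hi1 where Q1:
        "\<And>x. Q1 x $ a $ b = Complex (coeff_bilinear hr1 x x) (coeff_bilinear hi1 x x)"
      using op_quadratic_map_entry[OF assms(5)] by blast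
    obtain hr2 hi2 where Q2:
        "\<And>x. Q2 x $ a $ b = Complex (coeff_bilinear hr2 x x) (coeff_bilinear hi2 x x)"
      using op_quadratic_map_entry[OF assms(6)] by blast
    have "Q1 (u i) $ a $ b = Q2 (u i) $ a $ b" for i
      using assms(7) by simp
    then have "coeff_bilinear hr1 (u i) (u i) = coeff_bilinear hr2 (u i) (u i)"
        and "coeff_bilinear hi1 (u i) (u i) = coeff_bilinear hi2 (u i) (u i)" for i
      by (simp_all add: Q1 Q2)
    from quadratic_eq[OF this(1)] quadratic_eq[OF this(2)] show ?thesis
      by (simp add: Q1 Q2)
  qed
  then show ?thesis
    by (simp add: fun_eq_iff vec_eq_iff)
qed

end
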